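(* Let $k\ge2$, let $U\subseteq\mathbb{R}^d$ be a set of $k$ distinct points, and let $V\subseteq U$ with $|V|\ge2$. Sample threshold cuts independently from $D_2'(V)$ until every far pair of points of $V$ is separated by at least one sampled cut. Then the expected number of sampled cuts is at most $24\ln|V|\cdot s(V)\cdot\frac{L_2(V)}{\Delta(V)}$.
   Context: For dimension $i$ and reals $x,y$, $\mathcal{I}_i(x,y)$ is the set of consecutive intervals into which the segment between $x$ and $y$ is partitioned by the projections $v_i$ ($v\in V$) lying between $x$ and $y$. $\mathcal{I}_i=\mathcal{I}_i(\min_{v\in V}v_i,\max_{v\in V}v_i)$, $\mathcal{I}_{\mathrm{all}}(V)=\{(i,[a,b]):[a,b]\in\mathcal{I}_i\}$, $L_2(V)=\sum_{(i,[a,b])\in\mathcal{I}_{\mathrm{all}}(V)}(b-a)^2$. Pseudo-distance: $d_2(x,y)=\sum_i\sum_{[a,b]\in\mathcal{I}_i(x_i,y_i)}(b-a)^2$. $\Delta(V)=\max_{x,y\in V}\|x-y\|_2^2$. A pair $x,y\in V$ is far if $\|x-y\|_2^2\ge\Delta(V)/2$ and close if $\|x-y\|_2^2<\Delta(V)/k^4$. The stretch of a pair is $\|x-y\|_2^2/d_2(x,y)$ and $s(V)$ is the maximum stretch of a far pair in $V$. $R(V)$ is the set of $(i,[a,b])\in\mathcal{I}_{\mathrm{all}}(V)$ with $[a,b]$ contained in $[\min(x_i,y_i),\max(x_i,y_i)]$ for some close pair $x,y$; $L_2'(V)=\sum_{\mathcal{I}_{\mathrm{all}}(V)\setminus R(V)}(b-a)^2$.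 The distribution $D_2'(V)$ chooses $(i,[a,b])\in\mathcal{I}_{\mathrm{all}}(V)\setminus R(V)$ with probability $(b-a)^2/L_2'(V)$ and then $\theta\in[a,b]$ with density $\frac{4}{(b-a)^2}\min(\theta-a,b-\theta)$. A cut $(i,\theta)$ separates $x,y$ if $\theta$ lies strictly between $x_i$ and $y_i$. *)

theory Defs
  imports "HOL-Probability.Probability"
begin

type_synonym 'd point = "real ^ 'd"

definition breakpts :: "'d::finite \<Rightarrow> 'd point set \<Rightarrow> real \<Rightarrow> real \<Rightarrow> real set" where
  "breakpts i V x y = {x, y} \<union> {p \<in> (\<lambda>v. v $ i) ` V. min x y \<le> p \<and> p \<le> max x y}"

definition Iv :: "'d::finite \<Rightarrow> 'd point set \<Rightarrow> real \<Rightarrow> real \<Rightarrow> (real \<times> real) set" where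
  "Iv i V x y = {(a, b). a \<in> breakpts i V x y \<and> b \<in> breakpts i V x y \<and> a < b \<and>
                   \<not> (\<exists>p \<in> breakpts i V x y. a < p \<and> p < b)}"

definition Idim :: "'d::finite \<Rightarrow> 'd point set \<Rightarrow> (real \<times> real) set" where
  "Idim i V = Iv i V (Min ((\<lambda>v. v $ i) ` V)) (Max ((\<lambda>v. v $ i) ` V))"

definition Iall :: "'d::finite point set \<Rightarrow> ('d \<times> real \<times> real) set" where
  "Iall V = {(i, a, b). (a, b) \<in> Idim i V}"

definition L2 :: "'d::finite point set \<Rightarrow> real" where
  "L2 V = (\<Sum>(i, a, b) \<in> Iall V. (b - a)\<^sup>2)"

definition d2 :: "'d::finite point set \<Rightarrow> 'd point \<Rightarrow> 'd point \<Rightarrow> real" where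
  "d2 V x y = (\<Sum>i\<in>UNIV. \<Sum>(a, b) \<in> Iv i V (x $ i) (y $ i). (b - a)\<^sup>2)"

definition Delta :: "'d::finite point set \<Rightarrow> real" where
  "Delta V = Max {(norm (x - y))\<^sup>2 | x y. x \<in> V \<and> y \<in> V}"

definition far :: "'d::finite point set \<Rightarrow> 'd point \<Rightarrow> 'd point \<Rightarrow> bool" where
  "far V x y \<longleftrightarrow> (norm (x - y))\<^sup>2 \<ge> Delta V / 2"

definition close :: "nat \<Rightarrow> 'd::finite point set \<Rightarrow> 'd point \<Rightarrow> 'd point \<Rightarrow> bool" where
  "close k V x y \<longleftrightarrow> (norm (x - y))\<^sup>2 < Delta V / (real k) ^ 4"

definition stretch :: "'d::finite point set \<Rightarrow> 'd point \<Rightarrow> 'd point \<Rightarrow> real" where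
  "stretch V x y = (norm (x - y))\<^sup>2 / d2 V x y"

definition s_max :: "'d::finite point set \<Rightarrow> real" where
  "s_max V = Max {stretch V x y | x y. x \<in> V \<and> y \<in> V \<and> far V x y}"

definition R :: "nat \<Rightarrow> 'd::finite point set \<Rightarrow> ('d \<times> real \<times> real) set" where
  "R k V = {(i, a, b) \<in> Iall V. \<exists>x\<in>V. \<exists>y\<in>V. close k V x y \<and>
              min (x $ i) (y $ i) \<le> a \<and> b \<le> max (x $ i) (y $ i)}"

definition L2' :: "nat \<Rightarrow> 'd::finite point set \<Rightarrow> real" where
  "L2' k V = (\<Sum>(i, a, b) \<in> Iall V - R k V. (b - a)\<^sup>2)"

text \<open>The distribution D_2'(V) on cuts (i, theta): interval (i,[a,b]) chosen with probability
 (b-a)^2/L2', then theta with density 4/(b-a)^2 min(theta-a, b-theta); the joint density is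
 the sum below (intervals in one dimension overlap only at endpoints).\<close>
definition D2' :: "nat \<Rightarrow> 'd::finite point set \<Rightarrow> ('d \<times> real) measure" where
  "D2' k V = density (count_space UNIV \<Otimes>\<^sub>M lborel)
     (\<lambda>(i, \<theta>). ennreal (\<Sum>(j, a, b) \<in> Iall V - R k V.
         ((b - a)\<^sup>2 / L2' k V) * (if j = i \<and> a \<le> \<theta> \<and> \<theta> \<le> b
                                    then 4 / (b - a)\<^sup>2 * min (\<theta> - a) (b - \<theta>) else 0)))"

definition separates :: "'d::finite \<times> real \<Rightarrow> 'd point \<Rightarrow> 'd point \<Rightarrow> bool" where
  "separates c x y \<longleftrightarrow> min (x $ fst c) (y $ fst c) < snd c \<and> snd c < max (x $ fst c) (y $ fst c)"

definition num_cuts :: "'d::finite point set \<Rightarrow> ('d \<times> real) stream \<Rightarrow> ennreal" where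
  "num_cuts V \<omega> = (if \<exists>n. \<forall>x\<in>V. \<forall>y\<in>V. far V x y \<longrightarrow> (\<exists>j<n. separates (\<omega> !! j) x y)
     then of_nat (LEAST n. \<forall>x\<in>V. \<forall>y\<in>V. far V x y \<longrightarrow> (\<exists>j<n. separates (\<omega> !! j) x y))
     else \<infinity>)"

end

theory Submission
  imports Defs
begin

text \<open>
  Let p = Delta / (4 s L2), where s is the maximal stretch of a far pair. A single cut drawn
  from D2'(V) separates a given far pair x, y whenever it falls inside an interval between x
  and y that is not in R(V). These intervals have total squared length at least
  d2(x, y) - Delta/(4 s) \<ge> Delta/(4 s): indeed d2(x, y) \<ge> Delta/(2 s) because the pair is far,
  while the intervals of R(V) lie between the at most |V|^2 close pairs and so have total squared
  length at most |V|^2 Delta/k^4 \<le> Delta/k^2 \<le> Delta/(4 s). As L2' \<le> L2, the pair is separated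
  with probability at least p. By the union bound over the at most |V|^2 far pairs, more than t
  cuts are needed with probability at most min 1 (|V|^2 (1 - p)^t), and summing over t bounds
  the expectation by (2 ln |V| + 2)/p \<le> 24 ln |V| s L2 / Delta.
\<close>

lemma (in prob_space) emeasure_stream_space_prefix:
  assumes [measurable]: "C \<in> sets M"
  shows "emeasure (stream_space M) {\<omega> \<in> space (stream_space M). \<forall>j<t. \<omega> !! j \<in> C} = emeasure M C ^ t"
proof (induction t)
  case 0
  interpret S: prob_space "stream_space M" by (rule prob_space_stream_space)
  show ?case using S.emeasure_space_1 by simp
next
  case (Suc t)
  let ?P = "\<lambda>t. {\<omega> \<in> space (stream_space M). \<forall>j<t. \<omega> !! j \<in> C}"
  have shift: "{\<omega> \<in> space (stream_space M). c ## \<omega> \<in> ?P (Suc t)} = (if c \<in> C then ?P t else {})"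
    if "c \<in> space M" for c
    using that by (auto simp: space_stream_space less_Suc_eq_0_disj)
  have "emeasure (stream_space M) (?P (Suc t))
      = (\<integral>\<^sup>+c. emeasure (stream_space M) {\<omega> \<in> space (stream_space M). c ## \<omega> \<in> ?P (Suc t)} \<partial>M)"
    by (rule emeasure_stream_space) measurable
  also have "\<dots> = (\<integral>\<^sup>+c. indicator C c * emeasure M C ^ t \<partial>M)"
  proof (rule nn_integral_cong)
    fix c assume "c \<in> space M"
    then show "emeasure (stream_space M) {\<omega> \<in> space (stream_space M). c ## \<omega> \<in> ?P (Suc t)}
        = indicator C c * emeasure M C ^ t"
      by (subst shift) (simp_all add: Suc)
  qed
  also have "\<dots> = emeasure M C ^ Suc t"
    by (simp add: nn_integral_multc)
  finally show ?case .
qed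

definition cover_time :: "'i set \<Rightarrow> ('i \<Rightarrow> 'a set) \<Rightarrow> 'a stream \<Rightarrow> ennreal" where
  "cover_time F A \<omega> = (if \<exists>n. \<forall>c\<in>F. \<exists>j<n. \<omega> !! j \<in> A c
     then of_nat (LEAST n. \<forall>c\<in>F. \<exists>j<n. \<omega> !! j \<in> A c) else \<infinity>)"

lemma cover_time_le_suminf_uncovered:
  "cover_time F A \<omega> \<le> (\<Sum>t. indicator {\<omega>. \<exists>c\<in>F. \<forall>j<t. \<omega> !! j \<notin> A c} \<omega>)"
proof -
  let ?covered = "\<lambda>n. \<forall>c\<in>F. \<exists>j<n. \<omega> !! j \<in> A c"
  let ?S = "\<Sum>t. indicator {\<omega>. \<exists>c\<in>F. \<forall>j<t. \<omega> !! j \<notin> A c} \<omega> :: ennreal"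
  have prefix_le: "of_nat n \<le> ?S" if "\<forall>t<n. \<not> ?covered t" for n
  proof -
    have "of_nat n = (\<Sum>t<n. indicator {\<omega>. \<exists>c\<in>F. \<forall>j<t. \<omega> !! j \<notin> A c} \<omega> :: ennreal)"
      using that by simp
    also have "\<dots> \<le> ?S"
      by (rule sum_le_suminf) auto
    finally show ?thesis .
  qed
  show ?thesis
  proof (cases "\<exists>n. ?covered n")
    case True
    have "\<forall>t < (LEAST n. ?covered n). \<not> ?covered t"
      by (blast dest: not_less_Least)
    have "cover_time F A \<omega> = of_nat (LEAST n. ?covered n)"
      unfolding cover_time_def using True by (rule if_P)
    also have "\<dots> \<le> ?S"
      using \<open>\<forall>t < (LEAST n. ?covered n). \<not> ?covered t\<close> by (rule prefix_le)
    finally show ?thesis .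
  next
    case False
    have "?S = top"
    proof (rule ccontr)
      assume "?S \<noteq> top"
      then have "?S < top"
        by (simp only: less_top)
      then obtain n where "?S < of_nat n"
        using ennreal_Ex_less_of_nat by blast
      moreover have "of_nat n \<le> ?S"
        using False by (intro prefix_le) blast
      ultimately show False by simp
    qed
    then show ?thesis by simp
  qed
qed

lemma suminf_min_geometric_le:
  fixes p m :: real
  assumes "0 < p" "p \<le> 1" "1 \<le> m"
  shows "(\<Sum>t. ennreal (min 1 (m * (1 - p) ^ t))) \<le> ennreal ((ln m + 2) / p)"
proof -
  define q where "q = 1 - p"
  have q: "0 \<le> q" "q < 1" using assms by (auto simp: q_def)
  define N where "N = nat \<lceil>ln m / p\<rceil>"
  have N_ge: "ln m / p \<le> real N" and N_le: "real N \<le> ln m / p + 1"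
    using assms by (auto simp: N_def)
  \<comment> \<open>the first N terms are bounded by 1, the later ones by a geometric series, since m (1 - p)^N \<le> m exp (-p N) \<le> 1\<close>
  have "q ^ N \<le> exp (- p) ^ N"
    using q by (intro power_mono) (auto simp: q_def exp_ge_add_one_self[of "-p", simplified])
  also have "\<dots> = exp (- (p * real N))" by (simp add: exp_of_nat_mult[symmetric] mult.commute)
  also have "\<dots> \<le> exp (- ln m)" using N_ge assms by (simp add: divide_le_eq mult.commute)
  also have "\<dots> = inverse m" using assms by (simp add: exp_minus)
  finally have "m * q ^ N \<le> 1" using assms by (simp add: field_simps)
  define h where "h t = (if t < N then 1 else q ^ (t - N))" for t
  have term_le: "min 1 (m * q ^ t) \<le> h t" for t
  proof (cases "t < N")
    case False
    then have "m * q ^ t = (m * q ^ N) * q ^ (t - N)" by (simp flip: power_add)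
    also have "\<dots> \<le> q ^ (t - N)" using \<open>m * q ^ N \<le> 1\<close> q assms by (intro mult_left_le_one_le) auto
    finally show ?thesis using False by (simp add: h_def)
  qed (simp add: h_def)
  have "summable (\<lambda>t. h (t + N))" using q by (simp add: h_def summable_geometric)
  then have h_summable: "summable h" by simp
  have "1 \<le> 1 / p" using assms by simp
  have "suminf h = (\<Sum>t. h (t + N)) + (\<Sum>t<N. h t)" by (rule suminf_split_initial_segment[OF h_summable])
  also have "\<dots> = 1 / p + real N" using q by (simp add: h_def suminf_geometric q_def)
  also have "\<dots> \<le> 1 / p + (ln m / p + 1 / p)"
    using N_le \<open>1 \<le> 1 / p\<close> by linarith
  also have "\<dots> = (ln m + 2) / p"
    by (simp add: add_divide_distrib)
  finally have "suminf h \<le> (ln m + 2) / p" .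
  have "(\<Sum>t. ennreal (min 1 (m * (1 - p) ^ t))) \<le> (\<Sum>t. ennreal (h t))"
    using term_le by (intro suminf_le) (auto simp: q_def intro: ennreal_leI)
  also have "\<dots> = ennreal (suminf h)" using q by (intro suminf_ennreal2 h_summable) (simp add: h_def)
  also have "\<dots> \<le> ennreal ((ln m + 2) / p)" using \<open>suminf h \<le> _\<close> by (rule ennreal_leI)
  finally show ?thesis .
qed

lemma (in prob_space) sets_stream_space_prefix:
  assumes [measurable]: "C \<in> sets M"
  shows "{\<omega> \<in> space (stream_space M). \<forall>j<t. \<omega> !! j \<in> C} \<in> sets (stream_space M)"
  by measurable

lemma (in prob_space) emeasure_UN_stream_space_prefix_le:
  fixes p :: real
  assumes "finite F" "\<And>c. c \<in> F \<Longrightarrow> C c \<in> sets M" "p \<le> 1"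
    and "\<And>c. c \<in> F \<Longrightarrow> emeasure M (C c) \<le> ennreal (1 - p)"
  shows "emeasure (stream_space M) (\<Union>c\<in>F. {\<omega> \<in> space (stream_space M). \<forall>j<t. \<omega> !! j \<in> C c})
           \<le> ennreal (card F * (1 - p) ^ t)"
proof -
  have "emeasure (stream_space M) (\<Union>c\<in>F. {\<omega> \<in> space (stream_space M). \<forall>j<t. \<omega> !! j \<in> C c})
      \<le> (\<Sum>c\<in>F. emeasure (stream_space M) {\<omega> \<in> space (stream_space M). \<forall>j<t. \<omega> !! j \<in> C c})"
    using assms(1,2) by (intro emeasure_subadditive_finite) (auto intro: sets_stream_space_prefix)
  also have "\<dots> = (\<Sum>c\<in>F. emeasure M (C c) ^ t)"
    using assms(2) by (intro sum.cong refl emeasure_stream_space_prefix)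
  also have "\<dots> \<le> (\<Sum>c\<in>F. ennreal (1 - p) ^ t)"
    using assms(4) by (intro sum_mono power_mono) auto
  also have "\<dots> = ennreal (card F * (1 - p) ^ t)"
    using assms(3) by (simp add: ennreal_power ennreal_of_nat_eq_real_of_nat ennreal_mult)
  finally show ?thesis .
qed

lemma (in prob_space) nn_integral_cover_time_le:
  assumes "finite F" "F \<noteq> {}" and A_sets: "\<And>c. c \<in> F \<Longrightarrow> A c \<in> events"
    and "0 < p" and p_le: "\<And>c. c \<in> F \<Longrightarrow> p \<le> prob (A c)"
  shows "(\<integral>\<^sup>+\<omega>. cover_time F A \<omega> \<partial>stream_space M) \<le> ennreal ((ln (card F) + 2) / p)"
proof -
  interpret S: prob_space "stream_space M" by (rule prob_space_stream_space)
  define B where "B t = (\<Union>c\<in>F. {\<omega> \<in> space (stream_space M). \<forall>j<t. \<omega> !! j \<in> space M - A c})" for t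
  have B_sets: "B t \<in> sets (stream_space M)" for t
    unfolding B_def using \<open>finite F\<close> A_sets by (intro sets.finite_UN sets_stream_space_prefix) auto
  have "p \<le> 1" using \<open>F \<noteq> {}\<close> p_le prob_le_1 order.trans by blast
  have "emeasure M (space M - A c) \<le> ennreal (1 - p)" if "c \<in> F" for c
    using p_le[OF that] A_sets[OF that] by (simp add: emeasure_eq_measure prob_compl ennreal_leI)
  then have "emeasure (stream_space M) (B t) \<le> ennreal (card F * (1 - p) ^ t)" for t
    unfolding B_def using \<open>finite F\<close> A_sets \<open>p \<le> 1\<close> by (intro emeasure_UN_stream_space_prefix_le) auto
  then have B_le: "emeasure (stream_space M) (B t) \<le> ennreal (min 1 (card F * (1 - p) ^ t))" for t
    using S.emeasure_le_1[of "B t"] by (cases "1 \<le> card F * (1 - p) ^ t") (auto simp: min_def)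
  have "(\<integral>\<^sup>+\<omega>. cover_time F A \<omega> \<partial>stream_space M) \<le> (\<integral>\<^sup>+\<omega>. (\<Sum>t. indicator (B t) \<omega>) \<partial>stream_space M)"
  proof (rule nn_integral_mono)
    fix \<omega> assume \<omega>: "\<omega> \<in> space (stream_space M)"
    then have "\<omega> !! j \<in> space M" for j
      by (simp add: space_stream_space snth_in)
    with \<omega> have "indicator {\<omega>. \<exists>c\<in>F. \<forall>j<t. \<omega> !! j \<notin> A c} \<omega> = (indicator (B t) \<omega> :: ennreal)" for t
      by (auto simp: B_def split: split_indicator)
    then show "cover_time F A \<omega> \<le> (\<Sum>t. indicator (B t) \<omega>)"
      using cover_time_le_suminf_uncovered[of F A \<omega>] by simp
  qed
  also have "\<dots> = (\<Sum>t. emeasure (stream_space M) (B t))"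
    using B_sets by (simp add: nn_integral_suminf)
  also have "\<dots> \<le> (\<Sum>t. ennreal (min 1 (card F * (1 - p) ^ t)))"
    by (intro suminf_le B_le) auto
  also have "\<dots> \<le> ennreal ((ln (card F) + 2) / p)"
    using \<open>finite F\<close> \<open>F \<noteq> {}\<close> \<open>0 < p\<close> \<open>p \<le> 1\<close>
    by (intro suminf_min_geometric_le) (auto simp: Suc_le_eq card_gt_0_iff)
  finally show ?thesis .
qed

definition gaps :: "'a::linorder set \<Rightarrow> ('a \<times> 'a) set" where
  "gaps B = {(a, b). a \<in> B \<and> b \<in> B \<and> a < b \<and> \<not> (\<exists>p\<in>B. a < p \<and> p < b)}"

lemma gaps_subset: "gaps B \<subseteq> B \<times> B"
  by (auto simp: gaps_def)

lemma finite_gaps: "finite B \<Longrightarrow> finite (gaps B)"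
  using finite_subset[OF gaps_subset] by blast

lemma gaps_singleton: "gaps {m} = {}"
  by (auto simp: gaps_def)

lemma gaps_insert_greater:
  assumes "finite B" "B \<noteq> {}" and greater: "\<forall>p\<in>B. p < m"
  shows "gaps (insert m B) = insert (Max B, m) (gaps B)"
proof (rule set_eqI, clarify)
  fix a b
  have Max: "Max B \<in> B" "\<And>p. p \<in> B \<Longrightarrow> p \<le> Max B"
    using assms by auto
  show "(a, b) \<in> gaps (insert m B) \<longleftrightarrow> (a, b) \<in> insert (Max B, m) (gaps B)"
  proof (cases "b = m")
    case True
    have "(a, m) \<in> gaps (insert m B) \<longleftrightarrow> a = Max B"
    proof
      assume "(a, m) \<in> gaps (insert m B)"
      then have "a \<in> B" "\<not> a < Max B"
        using Max greater by (auto simp: gaps_def)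
      then show "a = Max B"
        using Max(2) by (simp add: not_less eq_iff)
    qed (use Max greater in \<open>auto simp: gaps_def not_less\<close>)
    moreover have "(a, m) \<notin> gaps B"
      using gaps_subset greater by blast
    ultimately show ?thesis
      using True by simp
  next
    case False
    then show ?thesis
      using greater by (auto simp: gaps_def)
  qed
qed

lemma sum_gaps_length:
  fixes B :: "'a::linordered_ab_group_add set"
  shows "finite B \<Longrightarrow> B \<noteq> {} \<Longrightarrow> (\<Sum>(a, b)\<in>gaps B. b - a) = Max B - Min B"
proof (induction B rule: finite_linorder_max_induct)
  case (insert m B)
  show ?case
  proof (cases "B = {}")
    case False
    have "(Max B, m) \<notin> gaps B" using gaps_subset insert by blast
    moreover have "Max (insert m B) = m"
      using insert.hyps by (intro Max_eqI) auto
    moreover have "Min (insert m B) = Min B"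
      using insert.hyps Min_in[OF insert.hyps(1) False] by (intro Min_eqI) auto
    ultimately show ?thesis
      using insert False by (simp add: gaps_insert_greater finite_gaps)
  qed (simp add: gaps_singleton)
qed simp

lemma card_gaps: "finite B \<Longrightarrow> card (gaps B) = card B - 1"
proof (induction B rule: finite_linorder_max_induct)
  case (insert m B)
  show ?case
  proof (cases "B = {}")
    case False
    have "(Max B, m) \<notin> gaps B" "m \<notin> B" using gaps_subset insert by blast+
    with insert False show ?thesis
      by (simp add: gaps_insert_greater finite_gaps card_gt_0_iff Suc_diff_Suc)
  qed (simp add: gaps_singleton)
qed (simp add: gaps_def)

lemma gaps_restrict: "gaps {p \<in> B. lo \<le> p \<and> p \<le> hi} = {(a, b) \<in> gaps B. lo \<le> a \<and> b \<le> hi}"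
  unfolding gaps_def by auto

lemma sum_sq_gaps_le:
  fixes B :: "real set"
  assumes "finite B" "B \<noteq> {}"
  shows "(\<Sum>(a, b)\<in>gaps B. (b - a)\<^sup>2) \<le> (Max B - Min B)\<^sup>2"
proof -
  have "(\<Sum>(a, b)\<in>gaps B. (b - a)\<^sup>2) \<le> (\<Sum>(a, b)\<in>gaps B. (b - a) * (Max B - Min B))"
  proof (intro sum_mono, clarify)
    fix a b assume ab: "(a, b) \<in> gaps B"
    then have "a < b" by (simp add: gaps_def)
    have "(\<lambda>(a, b). b - a) (a, b) \<le> (\<Sum>(a, b)\<in>gaps B. b - a)"
      using ab finite_gaps[OF assms(1)] by (intro member_le_sum) (auto simp: gaps_def)
    then have "b - a \<le> Max B - Min B"
      by (simp add: sum_gaps_length[OF assms])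
    with \<open>a < b\<close> show "(b - a)\<^sup>2 \<le> (b - a) * (Max B - Min B)"
      by (simp add: power2_eq_square)
  qed
  also have "\<dots> = (Max B - Min B)\<^sup>2"
    using sum_gaps_length[OF assms]
    by (simp add: sum_distrib_right[symmetric] case_prod_beta power2_eq_square)
  finally show ?thesis .
qed

lemma sq_width_le_card_mult_sum_sq_gaps:
  fixes B :: "real set"
  assumes "finite B" "B \<noteq> {}"
  shows "(Max B - Min B)\<^sup>2 \<le> real (card B - 1) * (\<Sum>(a, b)\<in>gaps B. (b - a)\<^sup>2)"
proof -
  have "(Max B - Min B)\<^sup>2 = (\<Sum>g\<in>gaps B. snd g - fst g)\<^sup>2"
    using sum_gaps_length[OF assms] by (simp add: case_prod_beta)
  also have "\<dots> \<le> (\<Sum>g\<in>gaps B. (snd g - fst g)\<^sup>2) * real (card (gaps B))"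
    by (rule sum_squared_le_sum_of_squares)
  finally show ?thesis
    using assms by (simp add: card_gaps case_prod_beta mult.commute)
qed

lemma Iv_eq_gaps: "Iv i V x y = gaps (breakpts i V x y)"
  by (simp add: Iv_def gaps_def)

lemma finite_breakpts: "finite V \<Longrightarrow> finite (breakpts i V x y)"
  by (simp add: breakpts_def)

lemma Max_breakpts: "finite V \<Longrightarrow> Max (breakpts i V x y) = max x y"
  by (intro Max_eqI finite_breakpts) (auto simp: breakpts_def)

lemma Min_breakpts: "finite V \<Longrightarrow> Min (breakpts i V x y) = min x y"
  by (intro Min_eqI finite_breakpts) (auto simp: breakpts_def)

lemma breakpts_of_members:
  assumes "x \<in> V" "y \<in> V"
  shows "breakpts i V (x $ i) (y $ i) = {p \<in> (\<lambda>v. v $ i) ` V. min (x $ i) (y $ i) \<le> p \<and> p \<le> max (x $ i) (y $ i)}"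
  using assms by (auto simp: breakpts_def)

lemma Idim_eq_gaps:
  assumes "finite V" "V \<noteq> {}"
  shows "Idim i V = gaps ((\<lambda>v. v $ i) ` V)"
proof -
  let ?P = "(\<lambda>v. v $ i) ` V"
  have "breakpts i V (Min ?P) (Max ?P) = ?P"
    using assms by (auto simp: breakpts_def intro!: Min_in Max_in)
  then show ?thesis
    by (simp add: Idim_def Iv_eq_gaps)
qed

lemma Iv_eq_Idim_between:
  assumes "finite V" "x \<in> V" "y \<in> V"
  shows "Iv i V (x $ i) (y $ i) = {(a, b) \<in> Idim i V. min (x $ i) (y $ i) \<le> a \<and> b \<le> max (x $ i) (y $ i)}"
proof -
  have "V \<noteq> {}" using assms by auto
  with assms show ?thesis
    by (simp add: Iv_eq_gaps breakpts_of_members Idim_eq_gaps gaps_restrict)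
qed

lemma Iv_bounds: "(a, b) \<in> Iv i V x y \<Longrightarrow> min x y \<le> a \<and> b \<le> max x y"
  by (auto simp: Iv_eq_gaps gaps_def breakpts_def)

lemma finite_Iall: "finite V \<Longrightarrow> finite (Iall V)"
proof -
  assume "finite V"
  then have "finite (Idim i V)" for i
    by (simp add: Idim_def Iv_eq_gaps finite_gaps finite_breakpts)
  moreover have "Iall V = Sigma UNIV (\<lambda>i. Idim i V)"
    by (auto simp: Iall_def)
  ultimately show ?thesis by auto
qed

lemma Iall_lt: "(i, a, b) \<in> Iall V \<Longrightarrow> a < b"
  by (auto simp: Iall_def Idim_def Iv_def)

lemma norm_sq_eq_sum_sq_components:
  fixes x y :: "real ^ 'd::finite"
  shows "(norm (x - y))\<^sup>2 = (\<Sum>i\<in>UNIV. (x $ i - y $ i)\<^sup>2)"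
  unfolding power2_norm_eq_inner by (simp add: inner_vec_def power2_eq_square)

lemma sq_max_minus_min: "(max u v - min u v)\<^sup>2 = (u - v :: real)\<^sup>2"
  by (simp add: max_def min_def power2_commute)

lemma d2_le_norm_sq:
  assumes "finite V"
  shows "d2 V x y \<le> (norm (x - y))\<^sup>2"
  unfolding d2_def norm_sq_eq_sum_sq_components
proof (rule sum_mono)
  fix i
  let ?B = "breakpts i V (x $ i) (y $ i)"
  have "?B \<noteq> {}"
    by (simp add: breakpts_def)
  with assms have "(\<Sum>(a, b)\<in>gaps ?B. (b - a)\<^sup>2) \<le> (Max ?B - Min ?B)\<^sup>2"
    by (intro sum_sq_gaps_le finite_breakpts)
  then show "(\<Sum>(a, b)\<in>Iv i V (x $ i) (y $ i). (b - a)\<^sup>2) \<le> (x $ i - y $ i)\<^sup>2"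
    using assms by (simp add: Iv_eq_gaps Max_breakpts Min_breakpts sq_max_minus_min)
qed

lemma norm_sq_le_card_mult_d2:
  assumes "finite V" "x \<in> V" "y \<in> V"
  shows "(norm (x - y))\<^sup>2 \<le> real (card V - 1) * d2 V x y"
  unfolding d2_def norm_sq_eq_sum_sq_components sum_distrib_left[where A = UNIV]
proof (rule sum_mono)
  fix i
  let ?B = "breakpts i V (x $ i) (y $ i)"
  have "?B \<subseteq> (\<lambda>v. v $ i) ` V"
    using assms by (auto simp: breakpts_def)
  then have "card ?B \<le> card V"
    using assms(1) by (meson card_image_le card_mono finite_imageI order.trans)
  have "?B \<noteq> {}"
    by (simp add: breakpts_def)
  have "(x $ i - y $ i)\<^sup>2 = (Max ?B - Min ?B)\<^sup>2"
    using assms by (simp add: Max_breakpts Min_breakpts sq_max_minus_min)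
  also have "\<dots> \<le> real (card ?B - 1) * (\<Sum>(a, b)\<in>gaps ?B. (b - a)\<^sup>2)"
    using assms \<open>?B \<noteq> {}\<close> by (intro sq_width_le_card_mult_sum_sq_gaps finite_breakpts)
  also have "\<dots> \<le> real (card V - 1) * (\<Sum>(a, b)\<in>gaps ?B. (b - a)\<^sup>2)"
    using \<open>card ?B \<le> card V\<close> by (intro mult_right_mono sum_nonneg) auto
  finally show "(x $ i - y $ i)\<^sup>2 \<le> real (card V - 1) * (\<Sum>(a, b)\<in>Iv i V (x $ i) (y $ i). (b - a)\<^sup>2)"
    by (simp add: Iv_eq_gaps)
qed

lemma finite_pair_values:
  "finite V \<Longrightarrow> finite {f x y | x y. x \<in> V \<and> y \<in> V \<and> P x y}"
  by (rule finite_subset[of _ "(\<lambda>(x, y). f x y) ` (V \<times> V)"]) auto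

lemma norm_sq_le_Delta:
  assumes "finite V" "x \<in> V" "y \<in> V"
  shows "(norm (x - y))\<^sup>2 \<le> Delta V"
  unfolding Delta_def using assms
  by (intro Max_ge finite_pair_values[where P = "\<lambda>_ _. True", simplified]) auto

lemma Delta_attained:
  assumes "finite V" "V \<noteq> {}"
  obtains x y where "x \<in> V" "y \<in> V" "Delta V = (norm (x - y))\<^sup>2"
proof -
  have "Delta V \<in> {(norm (x - y))\<^sup>2 | x y. x \<in> V \<and> y \<in> V}"
    unfolding Delta_def using assms
    by (intro Max_in finite_pair_values[where P = "\<lambda>_ _. True", simplified]) auto
  then show ?thesis using that by blast
qed

lemma Delta_pos:
  assumes "finite V" "card V \<ge> 2"
  shows "Delta V > 0"
proof -
  obtain x y where "x \<in> V" "y \<in> V" "x \<noteq> y"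
    using assms by (metis card_le_Suc_iff numeral_2_eq_2 insertCI)
  then have "0 < (norm (x - y))\<^sup>2" by simp
  also have "\<dots> \<le> Delta V" using assms(1) \<open>x \<in> V\<close> \<open>y \<in> V\<close> by (rule norm_sq_le_Delta)
  finally show ?thesis .
qed

lemma ex_far_pair:
  assumes "finite V" "card V \<ge> 2"
  obtains x y where "x \<in> V" "y \<in> V" "far V x y"
proof -
  obtain x y where "x \<in> V" "y \<in> V" "Delta V = (norm (x - y))\<^sup>2"
    using assms by (elim Delta_attained) auto
  with Delta_pos[OF assms] show ?thesis
    using that by (simp add: far_def)
qed

lemma norm_sq_pos_if_far:
  assumes "finite V" "card V \<ge> 2" "far V x y"
  shows "0 < (norm (x - y))\<^sup>2"
  using Delta_pos[OF assms(1,2)] assms(3) unfolding far_def by linarith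

lemma d2_pos_if_far:
  assumes "finite V" "card V \<ge> 2" "x \<in> V" "y \<in> V" "far V x y"
  shows "d2 V x y > 0"
proof -
  have "0 < (norm (x - y))\<^sup>2"
    using assms(1,2,5) by (rule norm_sq_pos_if_far)
  also have "\<dots> \<le> real (card V - 1) * d2 V x y"
    using assms by (intro norm_sq_le_card_mult_d2)
  finally show ?thesis
    by (simp add: zero_less_mult_iff)
qed

lemma stretch_le_s_max:
  assumes "finite V" "x \<in> V" "y \<in> V" "far V x y"
  shows "stretch V x y \<le> s_max V"
  unfolding s_max_def using assms by (intro Max_ge finite_pair_values) auto

lemma s_max_bounds:
  assumes "finite V" "card V \<ge> 2"
  shows "0 < s_max V" "s_max V \<le> real (card V - 1)"
proof -
  obtain x0 y0 where "x0 \<in> V" "y0 \<in> V" "far V x0 y0"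
    using assms by (rule ex_far_pair)
  then have "s_max V \<in> {stretch V x y | x y. x \<in> V \<and> y \<in> V \<and> far V x y}"
    unfolding s_max_def using assms by (intro Max_in finite_pair_values) auto
  then obtain x y where xy: "x \<in> V" "y \<in> V" "far V x y" "s_max V = stretch V x y"
    by blast
  have "0 < d2 V x y" using assms xy by (intro d2_pos_if_far)
  moreover have "0 < (norm (x - y))\<^sup>2"
    using assms xy(3) by (rule norm_sq_pos_if_far)
  moreover have "(norm (x - y))\<^sup>2 \<le> real (card V - 1) * d2 V x y"
    using assms xy by (intro norm_sq_le_card_mult_d2)
  ultimately show "0 < s_max V" "s_max V \<le> real (card V - 1)"
    by (simp_all add: xy(4) stretch_def pos_divide_le_eq)
qed

lemma d2_ge_if_far:
  assumes "finite V" "card V \<ge> 2" "x \<in> V" "y \<in> V" "far V x y"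
  shows "Delta V / (2 * s_max V) \<le> d2 V x y"
proof -
  have "Delta V / 2 \<le> (norm (x - y))\<^sup>2"
    using assms(5) by (simp add: far_def)
  also have "\<dots> \<le> s_max V * d2 V x y"
    using stretch_le_s_max[OF assms(1,3-5)] d2_pos_if_far[OF assms]
    by (simp add: stretch_def pos_divide_le_eq)
  finally show ?thesis
    using s_max_bounds(1)[OF assms(1,2)] by (simp add: divide_le_eq mult.commute mult.left_commute)
qed

definition Ibetween :: "'d::finite point set \<Rightarrow> 'd point \<Rightarrow> 'd point \<Rightarrow> ('d \<times> real \<times> real) set" where
  "Ibetween V x y = Sigma UNIV (\<lambda>i. Iv i V (x $ i) (y $ i))"

lemma finite_Ibetween: "finite V \<Longrightarrow> finite (Ibetween V x y)"
  by (auto simp: Ibetween_def Iv_eq_gaps intro!: finite_gaps finite_breakpts)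

lemma d2_eq_sum_Ibetween: "finite V \<Longrightarrow> d2 V x y = (\<Sum>(i, a, b)\<in>Ibetween V x y. (b - a)\<^sup>2)"
  unfolding d2_def Ibetween_def
  by (subst sum.Sigma) (auto simp: Iv_eq_gaps case_prod_beta intro!: finite_gaps finite_breakpts)

lemma Ibetween_subset_Iall:
  "finite V \<Longrightarrow> x \<in> V \<Longrightarrow> y \<in> V \<Longrightarrow> Ibetween V x y \<subseteq> Iall V"
  by (auto simp: Ibetween_def Iall_def Iv_eq_Idim_between)

lemma R_subset_UN_Ibetween_close:
  assumes "finite V"
  shows "R k V \<subseteq> (\<Union>(x, y)\<in>{(x, y) \<in> V \<times> V. close k V x y}. Ibetween V x y)"
proof
  fix z assume "z \<in> R k V"
  then obtain i a b x y where z: "z = (i, a, b)" and xy: "x \<in> V" "y \<in> V" "close k V x y"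
    and "(a, b) \<in> Idim i V" "min (x $ i) (y $ i) \<le> a" "b \<le> max (x $ i) (y $ i)"
    by (auto simp: R_def Iall_def)
  with assms have "z \<in> Ibetween V x y"
    by (simp add: Ibetween_def Iv_eq_Idim_between)
  with xy show "z \<in> (\<Union>(x, y)\<in>{(x, y) \<in> V \<times> V. close k V x y}. Ibetween V x y)"
    by blast
qed

lemma sum_sq_R_le:
  assumes "finite V" "V \<noteq> {}"
  shows "(\<Sum>(i, a, b)\<in>R k V. (b - a)\<^sup>2) \<le> (real (card V))\<^sup>2 * Delta V / real k ^ 4"
proof -
  let ?C = "{(x, y) \<in> V \<times> V. close k V x y}"
  let ?f = "\<lambda>(i :: 'a, a :: real, b). (b - a)\<^sup>2"
  have "finite ?C"
    by (rule finite_subset[of _ "V \<times> V"]) (use assms(1) in auto)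
  have "0 \<le> Delta V"
    using assms norm_sq_le_Delta[of V] by (meson all_not_in_conv order.trans zero_le_power2)
  have "R k V \<subseteq> snd ` (SIGMA c:?C. Ibetween V (fst c) (snd c))"
    using R_subset_UN_Ibetween_close[OF assms(1), of k] by force
  then have "sum ?f (R k V) \<le> sum ?f (snd ` (SIGMA c:?C. Ibetween V (fst c) (snd c)))"
    using \<open>finite ?C\<close> assms(1) by (intro sum_mono2) (auto simp: finite_Ibetween)
  also have "\<dots> \<le> sum (?f \<circ> snd) (SIGMA c:?C. Ibetween V (fst c) (snd c))"
    using \<open>finite ?C\<close> assms(1) by (intro sum_image_le) (auto simp: finite_Ibetween)
  also have "\<dots> = (\<Sum>c\<in>?C. \<Sum>z\<in>Ibetween V (fst c) (snd c). ?f z)"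
    using \<open>finite ?C\<close> assms(1) by (subst sum.Sigma) (auto simp: finite_Ibetween comp_def case_prod_beta)
  also have "\<dots> = (\<Sum>c\<in>?C. d2 V (fst c) (snd c))"
    using assms(1) by (simp add: d2_eq_sum_Ibetween)
  also have "\<dots> \<le> (\<Sum>c\<in>?C. Delta V / real k ^ 4)"
    using assms(1) d2_le_norm_sq[OF assms(1)]
    by (intro sum_mono) (fastforce simp: close_def intro: order.trans less_imp_le)
  also have "\<dots> = real (card ?C) * (Delta V / real k ^ 4)"
    by simp
  also have "\<dots> \<le> (real (card V))\<^sup>2 * (Delta V / real k ^ 4)"
  proof (rule mult_right_mono)
    have "card ?C \<le> card (V \<times> V)"
      using assms(1) by (intro card_mono) auto
    then have "real (card ?C) \<le> real (card V * card V)"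
      unfolding card_cartesian_product by (rule of_nat_mono)
    then show "real (card ?C) \<le> (real (card V))\<^sup>2"
      by (simp only: of_nat_mult power2_eq_square)
  qed (use \<open>0 \<le> Delta V\<close> in simp)
  finally show ?thesis
    by (simp only: times_divide_eq_right)
qed

lemma sum_sq_R_le_Delta_div_s_max:
  assumes "finite V" "card V \<ge> 2" "card V \<le> k"
  shows "(\<Sum>(i, a, b)\<in>R k V. (b - a)\<^sup>2) \<le> Delta V / (4 * s_max V)"
proof -
  have "0 < Delta V"
    using assms(1,2) by (rule Delta_pos)
  have "0 < s_max V" "s_max V \<le> real (card V - 1)"
    using assms(1,2) by (rule s_max_bounds)+
  have "real k \<ge> 2" using assms by linarith
  have "s_max V \<le> real k - 1"
    using \<open>s_max V \<le> _\<close> assms(2,3) by (simp add: of_nat_diff)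
  then have "4 * s_max V \<le> real k ^ 2"
    using sum_squares_ge_zero[of "real k - 2" 0] by (simp add: power2_eq_square algebra_simps)
  have "(\<Sum>(i, a, b)\<in>R k V. (b - a)\<^sup>2) \<le> (real (card V))\<^sup>2 * Delta V / real k ^ 4"
    using assms by (intro sum_sq_R_le) auto
  also have "\<dots> \<le> real k ^ 2 * Delta V / real k ^ 4"
    using assms \<open>0 < Delta V\<close> by (intro divide_right_mono mult_right_mono power_mono) auto
  also have "\<dots> = Delta V / real k ^ 2"
    using \<open>real k \<ge> 2\<close> by (simp add: field_simps eval_nat_numeral)
  also have "\<dots> \<le> Delta V / (4 * s_max V)"
    using \<open>4 * s_max V \<le> _\<close> \<open>0 < Delta V\<close> \<open>0 < s_max V\<close> \<open>real k \<ge> 2\<close>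
    by (intro divide_left_mono) auto
  finally show ?thesis .
qed

lemma sum_sq_Ibetween_minus_R_ge:
  assumes "finite V" "card V \<ge> 2" "card V \<le> k" "x \<in> V" "y \<in> V" "far V x y"
  shows "Delta V / (4 * s_max V) \<le> (\<Sum>(i, a, b)\<in>Ibetween V x y - R k V. (b - a)\<^sup>2)"
proof -
  let ?f = "\<lambda>(i :: 'a, a :: real, b). (b - a)\<^sup>2"
  have "finite (R k V)"
    using finite_Iall[OF assms(1)] by (rule finite_subset[rotated]) (auto simp: R_def)
  have "sum ?f (Ibetween V x y \<inter> R k V) \<le> sum ?f (R k V)"
    using \<open>finite (R k V)\<close> by (intro sum_mono2) auto
  also have "\<dots> \<le> Delta V / (4 * s_max V)"
    using assms(1-3) by (rule sum_sq_R_le_Delta_div_s_max)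
  finally have "d2 V x y \<le> Delta V / (4 * s_max V) + sum ?f (Ibetween V x y - R k V)"
    unfolding d2_eq_sum_Ibetween[OF assms(1)] sum.Int_Diff[OF finite_Ibetween[OF assms(1), of x y], of ?f "R k V"]
    by (rule add_right_mono)
  moreover have "Delta V / (4 * s_max V) + Delta V / (4 * s_max V) = Delta V / (2 * s_max V)"
    by simp
  ultimately show ?thesis
    using d2_ge_if_far[OF assms(1,2,4-6)] by linarith
qed

definition tri_density :: "real \<Rightarrow> real \<Rightarrow> real \<Rightarrow> real" where
  "tri_density a b \<theta> = (if a \<le> \<theta> \<and> \<theta> \<le> b then 4 / (b - a)\<^sup>2 * min (\<theta> - a) (b - \<theta>) else 0)"

lemma tri_density_nonneg: "0 \<le> tri_density a b \<theta>"
  by (simp add: tri_density_def)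

lemma tri_density_outside: "\<not> (a < \<theta> \<and> \<theta> < b) \<Longrightarrow> tri_density a b \<theta> = 0"
  by (auto simp: tri_density_def)

lemma borel_measurable_tri_density [measurable]: "tri_density a b \<in> borel_measurable borel"
  unfolding tri_density_def by measurable

lemma has_integral_tri_density:
  assumes "a < b"
  shows "(tri_density a b has_integral 1) UNIV"
proof -
  define m where "m = (a + b) / 2"
  define c where "c = 4 / (b - a)\<^sup>2"
  have m: "a \<le> m" "m \<le> b" using assms by (auto simp: m_def)
  have "((\<lambda>\<theta>. c * (\<theta> - a)) has_integral (c * (m - a)\<^sup>2 / 2 - c * (a - a)\<^sup>2 / 2)) {a..m}"
    by (rule fundamental_theorem_of_calculus[OF m(1)])
      (auto intro!: derivative_eq_intros simp flip: has_real_derivative_iff_has_vector_derivative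
        simp: power2_eq_square field_simps)
  then have "((\<lambda>\<theta>. c * (\<theta> - a)) has_integral (c * (m - a)\<^sup>2 / 2)) {a..m}"
    by simp
  then have left: "((\<lambda>\<theta>. c * min (\<theta> - a) (b - \<theta>)) has_integral (c * (m - a)\<^sup>2 / 2)) {a..m}"
    by (rule has_integral_eq[rotated]) (auto simp: m_def)
  have "((\<lambda>\<theta>. c * (b - \<theta>)) has_integral (- c * (b - b)\<^sup>2 / 2 - - c * (b - m)\<^sup>2 / 2)) {m..b}"
    by (rule fundamental_theorem_of_calculus[OF m(2)])
      (auto intro!: derivative_eq_intros simp flip: has_real_derivative_iff_has_vector_derivative
        simp: power2_eq_square field_simps)
  then have "((\<lambda>\<theta>. c * (b - \<theta>)) has_integral (c * (b - m)\<^sup>2 / 2)) {m..b}"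
    by simp
  then have right: "((\<lambda>\<theta>. c * min (\<theta> - a) (b - \<theta>)) has_integral (c * (b - m)\<^sup>2 / 2)) {m..b}"
    by (rule has_integral_eq[rotated]) (auto simp: m_def)
  have "c * (m - a)\<^sup>2 / 2 + c * (b - m)\<^sup>2 / 2 = c * (b - a)\<^sup>2 / 4"
    by (simp add: m_def power2_eq_square field_simps)
  also have "\<dots> = 1"
    using assms by (simp add: c_def)
  finally have "c * (m - a)\<^sup>2 / 2 + c * (b - m)\<^sup>2 / 2 = 1" .
  then have "((\<lambda>\<theta>. c * min (\<theta> - a) (b - \<theta>)) has_integral 1) {a..b}"
    using has_integral_combine[OF m left right] by simp
  then have "((\<lambda>\<theta>. if \<theta> \<in> {a..b} then c * min (\<theta> - a) (b - \<theta>) else 0) has_integral 1) UNIV"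
    by (simp only: has_integral_restrict_UNIV)
  moreover have "(\<lambda>\<theta>. if \<theta> \<in> {a..b} then c * min (\<theta> - a) (b - \<theta>) else 0) = tri_density a b"
    by (auto simp: tri_density_def c_def)
  ultimately show ?thesis
    by simp
qed

lemma nn_integral_tri_density:
  assumes "a < b"
  shows "(\<integral>\<^sup>+\<theta>. ennreal (tri_density a b \<theta>) \<partial>lborel) = 1"
  using nn_integral_has_integral_lborel[OF _ tri_density_nonneg has_integral_tri_density[OF assms]]
  by simp

lemma nn_integral_tri_density_indicator:
  assumes "a < b" "\<And>\<theta>. a < \<theta> \<Longrightarrow> \<theta> < b \<Longrightarrow> (j, \<theta>) \<in> S"
  shows "(\<integral>\<^sup>+\<theta>. ennreal (tri_density a b \<theta>) * indicator S (j, \<theta>) \<partial>lborel) = 1"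
proof -
  have "(\<integral>\<^sup>+\<theta>. ennreal (tri_density a b \<theta>) * indicator S (j, \<theta>) \<partial>lborel)
      = (\<integral>\<^sup>+\<theta>. ennreal (tri_density a b \<theta>) \<partial>lborel)"
  proof (rule nn_integral_cong)
    fix \<theta>
    show "ennreal (tri_density a b \<theta>) * indicator S (j, \<theta>) = ennreal (tri_density a b \<theta>)"
      by (cases "a < \<theta> \<and> \<theta> < b") (simp_all add: assms(2) tri_density_outside)
  qed
  also have "\<dots> = 1"
    using assms(1) by (rule nn_integral_tri_density)
  finally show ?thesis .
qed

lemma nn_integral_tri_component:
  fixes j :: "'d::finite"
  assumes [measurable]: "S \<in> sets (count_space UNIV \<Otimes>\<^sub>M lborel)"
  shows "(\<integral>\<^sup>+z. ennreal (if j = fst z then tri_density a b (snd z) else 0) * indicator S z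
            \<partial>(count_space UNIV \<Otimes>\<^sub>M lborel))
       = (\<integral>\<^sup>+\<theta>. ennreal (tri_density a b \<theta>) * indicator S (j, \<theta>) \<partial>lborel)"
proof -
  have "(\<lambda>z. ennreal (if j = fst z then tri_density a b (snd z) else 0) * indicator S z)
      \<in> borel_measurable (count_space UNIV \<Otimes>\<^sub>M lborel)"
    by measurable
  then have "(\<integral>\<^sup>+z. ennreal (if j = fst z then tri_density a b (snd z) else 0) * indicator S z
            \<partial>(count_space UNIV \<Otimes>\<^sub>M lborel))
      = (\<integral>\<^sup>+i. \<integral>\<^sup>+\<theta>. ennreal (if j = i then tri_density a b \<theta> else 0) * indicator S (i, \<theta>) \<partial>lborel
            \<partial>count_space UNIV)"
    by (simp only: lborel.nn_integral_fst[symmetric] fst_conv snd_conv)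
  also have "\<dots> = (\<Sum>i\<in>UNIV. \<integral>\<^sup>+\<theta>. ennreal (if j = i then tri_density a b \<theta> else 0) * indicator S (i, \<theta>) \<partial>lborel)"
    by (rule nn_integral_count_space_finite[OF finite_class.finite_UNIV])
  also have "\<dots> = (\<Sum>i\<in>UNIV. if j = i then \<integral>\<^sup>+\<theta>. ennreal (tri_density a b \<theta>) * indicator S (j, \<theta>) \<partial>lborel else 0)"
    by (intro sum.cong refl) simp
  also have "\<dots> = (\<integral>\<^sup>+\<theta>. ennreal (tri_density a b \<theta>) * indicator S (j, \<theta>) \<partial>lborel)"
    by simp
  finally show ?thesis .
qed

definition tri_mixture :: "('d \<times> real \<times> real) set \<Rightarrow> real \<Rightarrow> ('d \<times> real) measure" where
  "tri_mixture W L = density (count_space UNIV \<Otimes>\<^sub>M lborel)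
     (\<lambda>(i, \<theta>). ennreal (\<Sum>(j, a, b)\<in>W. (b - a)\<^sup>2 / L * (if j = i then tri_density a b \<theta> else 0)))"

lemma D2'_eq_tri_mixture: "D2' k V = tri_mixture (Iall V - R k V) (L2' k V)"
  unfolding D2'_def tri_mixture_def tri_density_def
  by (intro arg_cong[where f = "density _"] ext) (auto intro!: sum.cong arg_cong[where f = ennreal])

lemma space_tri_mixture: "space (tri_mixture W L) = UNIV"
  by (simp add: tri_mixture_def space_pair_measure)

lemma tri_mixture_density_eq:
  assumes "0 \<le> L"
  shows "ennreal (\<Sum>(j, a, b)\<in>W. (b - a)\<^sup>2 / L * (if j = i then tri_density a b \<theta> else 0))
       = (\<Sum>(j, a, b)\<in>W. ennreal ((b - a)\<^sup>2 / L) * ennreal (if j = i then tri_density a b \<theta> else 0))"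
  using assms
  by (subst sum_ennreal[symmetric]) (auto simp: tri_density_nonneg ennreal_mult[symmetric] intro!: sum.cong)

lemma emeasure_tri_mixture:
  fixes W :: "('d::finite \<times> real \<times> real) set"
  assumes "finite W" "0 \<le> L" and [measurable]: "S \<in> sets (count_space UNIV \<Otimes>\<^sub>M lborel)"
  shows "emeasure (tri_mixture W L) S
       = (\<Sum>(j, a, b)\<in>W. ennreal ((b - a)\<^sup>2 / L) *
            (\<integral>\<^sup>+\<theta>. ennreal (tri_density a b \<theta>) * indicator S (j, \<theta>) \<partial>lborel))"
proof -
  let ?M = "count_space UNIV \<Otimes>\<^sub>M lborel"
  define g where "g I z = (case I of (j, a, b) \<Rightarrow>
    ennreal ((b - a)\<^sup>2 / L) * ennreal (if j = fst z then tri_density a b (snd z) else 0))"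
    for I :: "'d \<times> real \<times> real" and z :: "'d \<times> real"
  have g_measurable [measurable]: "g I \<in> borel_measurable ?M" for I
    unfolding g_def by (cases I) simp
  have density_eq: "(\<lambda>(i, \<theta>). ennreal (\<Sum>(j, a, b)\<in>W. (b - a)\<^sup>2 / L * (if j = i then tri_density a b \<theta> else 0))) z
      = (\<Sum>I\<in>W. g I z)" for z
  proof -
    obtain i \<theta> where "z = (i, \<theta>)" by fastforce
    then show ?thesis
      using tri_mixture_density_eq[OF assms(2), where W = W and i = i and \<theta> = \<theta>] by (simp add: g_def cong: if_cong)
  qed
  have "emeasure (tri_mixture W L) S
      = (\<integral>\<^sup>+z. (\<lambda>(i, \<theta>). ennreal (\<Sum>(j, a, b)\<in>W. (b - a)\<^sup>2 / L * (if j = i then tri_density a b \<theta> else 0))) z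
           * indicator S z \<partial>?M)"
    unfolding tri_mixture_def by (rule emeasure_density) measurable
  also have "\<dots> = (\<integral>\<^sup>+z. (\<Sum>I\<in>W. g I z * indicator S z) \<partial>?M)"
    by (simp only: density_eq sum_distrib_right)
  also have "\<dots> = (\<Sum>I\<in>W. \<integral>\<^sup>+z. g I z * indicator S z \<partial>?M)"
    using assms(1) by (intro nn_integral_sum) measurable
  also have "\<dots> = (\<Sum>(j, a, b)\<in>W. ennreal ((b - a)\<^sup>2 / L) *
            (\<integral>\<^sup>+\<theta>. ennreal (tri_density a b \<theta>) * indicator S (j, \<theta>) \<partial>lborel))"
  proof (intro sum.cong refl, clarify)
    fix j a b
    have "(\<integral>\<^sup>+z. g (j, a, b) z * indicator S z \<partial>?M)
        = ennreal ((b - a)\<^sup>2 / L) * (\<integral>\<^sup>+z. ennreal (if j = fst z then tri_density a b (snd z) else 0) * indicator S z \<partial>?M)"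
      unfolding g_def prod.case mult.assoc by (rule nn_integral_cmult) measurable
    then show "(\<integral>\<^sup>+z. g (j, a, b) z * indicator S z \<partial>?M)
        = ennreal ((b - a)\<^sup>2 / L) * (\<integral>\<^sup>+\<theta>. ennreal (tri_density a b \<theta>) * indicator S (j, \<theta>) \<partial>lborel)"
      by (simp only: nn_integral_tri_component[OF assms(3)])
  qed
  finally show ?thesis .
qed

lemma prob_space_tri_mixture:
  fixes W :: "('d::finite \<times> real \<times> real) set"
  assumes "finite W" "\<And>j a b. (j, a, b) \<in> W \<Longrightarrow> a < b"
    and "L = (\<Sum>(j, a, b)\<in>W. (b - a)\<^sup>2)" "0 < L"
  shows "prob_space (tri_mixture W L)"
proof (rule prob_spaceI)
  have UNIV_sets: "UNIV \<in> sets (count_space UNIV \<Otimes>\<^sub>M lborel)"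
    using sets.top[of "count_space UNIV \<Otimes>\<^sub>M lborel"] by (simp add: space_pair_measure)
  have "emeasure (tri_mixture W L) UNIV
      = (\<Sum>(j, a, b)\<in>W. ennreal ((b - a)\<^sup>2 / L) *
           (\<integral>\<^sup>+\<theta>. ennreal (tri_density a b \<theta>) * indicator UNIV (j, \<theta>) \<partial>lborel))"
    using assms(1,4) UNIV_sets by (intro emeasure_tri_mixture) auto
  also have "\<dots> = (\<Sum>(j, a, b)\<in>W. ennreal ((b - a)\<^sup>2 / L))"
    using assms(2) by (intro sum.cong refl) (auto simp: nn_integral_tri_density)
  also have "\<dots> = ennreal (\<Sum>(j, a, b)\<in>W. (b - a)\<^sup>2 / L)"
    using assms(4) by (subst sum_ennreal[symmetric]) (auto simp: case_prod_beta)
  also have "(\<Sum>(j, a, b)\<in>W. (b - a)\<^sup>2 / L) = 1"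
    using assms(3,4) by (simp add: sum_divide_distrib[symmetric] case_prod_beta)
  finally show "emeasure (tri_mixture W L) (space (tri_mixture W L)) = 1"
    by (simp add: space_tri_mixture)
qed

lemma emeasure_tri_mixture_ge:
  fixes W :: "('d::finite \<times> real \<times> real) set"
  assumes "finite W" "0 \<le> L" "W' \<subseteq> W" "\<And>j a b. (j, a, b) \<in> W' \<Longrightarrow> a < b"
    and S: "S \<in> sets (count_space UNIV \<Otimes>\<^sub>M lborel)"
    and inside: "\<And>j a b \<theta>. (j, a, b) \<in> W' \<Longrightarrow> a < \<theta> \<Longrightarrow> \<theta> < b \<Longrightarrow> (j, \<theta>) \<in> S"
  shows "ennreal (\<Sum>(j, a, b)\<in>W'. (b - a)\<^sup>2 / L) \<le> emeasure (tri_mixture W L) S"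
proof -
  have "ennreal (\<Sum>(j, a, b)\<in>W'. (b - a)\<^sup>2 / L) = (\<Sum>(j, a, b)\<in>W'. ennreal ((b - a)\<^sup>2 / L))"
    using assms(2) by (subst sum_ennreal[symmetric]) (auto simp: case_prod_beta)
  also have "\<dots> = (\<Sum>(j, a, b)\<in>W'. ennreal ((b - a)\<^sup>2 / L) *
           (\<integral>\<^sup>+\<theta>. ennreal (tri_density a b \<theta>) * indicator S (j, \<theta>) \<partial>lborel))"
    using assms(4) inside by (intro sum.cong refl) (auto simp: nn_integral_tri_density_indicator)
  also have "\<dots> \<le> (\<Sum>(j, a, b)\<in>W. ennreal ((b - a)\<^sup>2 / L) *
           (\<integral>\<^sup>+\<theta>. ennreal (tri_density a b \<theta>) * indicator S (j, \<theta>) \<partial>lborel))"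
    using assms(1,3) by (intro sum_mono2) auto
  also have "\<dots> = emeasure (tri_mixture W L) S"
    using assms(1,2) S by (rule emeasure_tri_mixture[symmetric])
  finally show ?thesis .
qed

lemma sets_separates:
  fixes x y :: "real ^ 'd::finite"
  shows "{c. separates c x y} \<in> sets (count_space UNIV \<Otimes>\<^sub>M lborel)"
proof -
  have [measurable]: "(\<lambda>c. v $ fst c) \<in> borel_measurable (count_space UNIV \<Otimes>\<^sub>M borel)" for v :: "real ^ 'd"
    by (rule measurable_compose[OF measurable_fst]) simp
  have "{c. separates c x y} = {c \<in> space (count_space UNIV \<Otimes>\<^sub>M borel).
      min (x $ fst c) (y $ fst c) < snd c \<and> snd c < max (x $ fst c) (y $ fst c)}"
    by (auto simp: separates_def space_pair_measure)
  also have "\<dots> \<in> sets (count_space UNIV \<Otimes>\<^sub>M borel)"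
    by measurable
  finally show ?thesis
    by simp
qed

lemma sets_D2': "sets (D2' k V) = sets (count_space UNIV \<Otimes>\<^sub>M lborel)"
  by (simp add: D2'_def)

lemma L2'_le_L2: "finite V \<Longrightarrow> L2' k V \<le> L2 V"
  unfolding L2'_def L2_def by (rule sum_mono2) (auto simp: finite_Iall)

lemma L2'_ge_Delta_div_s_max:
  assumes "finite V" "card V \<ge> 2" "card V \<le> k"
  shows "Delta V / (4 * s_max V) \<le> L2' k V"
proof -
  obtain x y where "x \<in> V" "y \<in> V" "far V x y"
    using assms(1,2) by (rule ex_far_pair)
  then have "Delta V / (4 * s_max V) \<le> (\<Sum>(i, a, b)\<in>Ibetween V x y - R k V. (b - a)\<^sup>2)"
    using assms by (intro sum_sq_Ibetween_minus_R_ge)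
  also have "\<dots> \<le> L2' k V"
    unfolding L2'_def using assms(1) Ibetween_subset_Iall[OF assms(1) \<open>x \<in> V\<close> \<open>y \<in> V\<close>]
    by (intro sum_mono2) (auto simp: finite_Iall)
  finally show ?thesis .
qed

lemma L2'_pos:
  assumes "finite V" "card V \<ge> 2" "card V \<le> k"
  shows "0 < L2' k V"
  using L2'_ge_Delta_div_s_max[OF assms] Delta_pos[OF assms(1,2)] s_max_bounds(1)[OF assms(1,2)]
  by (smt (verit) divide_pos_pos)

lemma prob_space_D2':
  assumes "finite V" "card V \<ge> 2" "card V \<le> k"
  shows "prob_space (D2' k V)"
  unfolding D2'_eq_tri_mixture
  using assms(1) L2'_pos[OF assms]
  by (intro prob_space_tri_mixture) (auto simp: finite_Iall Iall_lt L2'_def)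

lemma emeasure_separates_ge:
  assumes "finite V" "card V \<ge> 2" "card V \<le> k" "x \<in> V" "y \<in> V" "far V x y"
  shows "ennreal (Delta V / (4 * s_max V * L2 V)) \<le> emeasure (D2' k V) {c. separates c x y}"
proof -
  let ?W = "Ibetween V x y - R k V"
  have "0 < L2' k V" using assms(1-3) by (rule L2'_pos)
  moreover have "L2' k V \<le> L2 V" using assms(1) by (rule L2'_le_L2)
  ultimately have "0 < L2 V * L2' k V" by simp
  have "Delta V / (4 * s_max V * L2 V) = Delta V / (4 * s_max V) / L2 V"
    by simp
  also have "\<dots> \<le> Delta V / (4 * s_max V) / L2' k V"
    using \<open>L2' k V \<le> L2 V\<close> \<open>0 < L2 V * L2' k V\<close> Delta_pos[OF assms(1,2)] s_max_bounds(1)[OF assms(1,2)]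
    by (intro divide_left_mono) auto
  also have "\<dots> \<le> (\<Sum>(i, a, b)\<in>?W. (b - a)\<^sup>2) / L2' k V"
    using sum_sq_Ibetween_minus_R_ge[OF assms] \<open>0 < L2' k V\<close> by (intro divide_right_mono) auto
  also have "\<dots> = (\<Sum>(i, a, b)\<in>?W. (b - a)\<^sup>2 / L2' k V)"
    by (simp add: sum_divide_distrib case_prod_beta)
  finally have "ennreal (Delta V / (4 * s_max V * L2 V)) \<le> ennreal (\<Sum>(i, a, b)\<in>?W. (b - a)\<^sup>2 / L2' k V)"
    by (rule ennreal_leI)
  also have "\<dots> \<le> emeasure (D2' k V) {c. separates c x y}"
    unfolding D2'_eq_tri_mixture
  proof (rule emeasure_tri_mixture_ge)
    show "?W \<subseteq> Iall V - R k V"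
      using Ibetween_subset_Iall[OF assms(1,4,5)] by blast
    fix j a b \<theta> assume "(j, a, b) \<in> ?W" "a < \<theta>" "\<theta> < b"
    then show "(j, \<theta>) \<in> {c. separates c x y}"
      using Iv_bounds[of a b j V "x $ j" "y $ j"] by (auto simp: Ibetween_def separates_def)
  qed (use assms(1) \<open>0 < L2' k V\<close> in \<open>auto simp: finite_Iall Iall_lt sets_separates Ibetween_def Iv_def\<close>)
  finally show ?thesis .
qed

lemma prob_separates_ge:
  assumes "finite V" "card V \<ge> 2" "card V \<le> k" "x \<in> V" "y \<in> V" "far V x y"
  shows "Delta V / (4 * s_max V * L2 V) \<le> measure (D2' k V) {c. separates c x y}"
proof -
  interpret prob_space "D2' k V"
    using assms(1-3) by (rule prob_space_D2')
  show ?thesis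
    using emeasure_separates_ge[OF assms] by (simp add: emeasure_eq_measure ennreal_le_iff)
qed

lemma L2_pos:
  assumes "finite V" "card V \<ge> 2"
  shows "0 < L2 V"
proof -
  obtain x y where "x \<in> V" "y \<in> V" "far V x y"
    using assms by (rule ex_far_pair)
  then have "0 < d2 V x y"
    using assms by (intro d2_pos_if_far)
  also have "\<dots> \<le> L2 V"
    unfolding d2_eq_sum_Ibetween[OF assms(1)] L2_def
    using assms(1) Ibetween_subset_Iall[OF assms(1) \<open>x \<in> V\<close> \<open>y \<in> V\<close>]
    by (intro sum_mono2) (auto simp: finite_Iall)
  finally show ?thesis .
qed

lemma
  assumes "finite V" "card V \<ge> 2"
  shows finite_far_pairs: "finite {(x, y) \<in> V \<times> V. far V x y}"
    and far_pairs_nonempty: "{(x, y) \<in> V \<times> V. far V x y} \<noteq> {}"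
    and card_far_pairs_le: "card {(x, y) \<in> V \<times> V. far V x y} \<le> card V ^ 2"
proof -
  have "{(x, y) \<in> V \<times> V. far V x y} \<subseteq> V \<times> V"
    by auto
  then show "finite {(x, y) \<in> V \<times> V. far V x y}" "card {(x, y) \<in> V \<times> V. far V x y} \<le> card V ^ 2"
    using assms(1) card_mono[of "V \<times> V"] finite_subset[of _ "V \<times> V"]
    by (auto simp: card_cartesian_product power2_eq_square)
  obtain x y where "x \<in> V" "y \<in> V" "far V x y"
    using assms by (rule ex_far_pair)
  then show "{(x, y) \<in> V \<times> V. far V x y} \<noteq> {}"
    by auto
qed

lemma num_cuts_eq_cover_time:
  "num_cuts V \<omega> = cover_time {(x, y) \<in> V \<times> V. far V x y} (\<lambda>(x, y). {c. separates c x y}) \<omega>"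
proof -
  have "(\<forall>(x, y)\<in>{(x, y) \<in> V \<times> V. far V x y}. \<exists>j<n. \<omega> !! j \<in> {c. separates c x y})
      \<longleftrightarrow> (\<forall>x\<in>V. \<forall>y\<in>V. far V x y \<longrightarrow> (\<exists>j<n. separates (\<omega> !! j) x y))" for n
    by auto
  then show ?thesis
    by (simp add: num_cuts_def cover_time_def case_prod_beta)
qed

lemma ln_plus_two_le:
  fixes m n :: real
  assumes "1 \<le> m" "m \<le> n\<^sup>2" "2 \<le> n"
  shows "ln m + 2 \<le> 6 * ln n"
proof -
  have "ln m \<le> ln (n\<^sup>2)"
    using assms by simp
  also have "\<dots> = 2 * ln n"
    using assms(3) by (simp add: ln_realpow)
  finally have "ln m \<le> 2 * ln n" .
  moreover have "2 / 3 \<le> ln n"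
    using ln2_ge_two_thirds assms(3) by (smt (verit) ln_le_cancel_iff)
  ultimately show ?thesis
    by linarith
qed

theorem lemma4p5:
  fixes U V :: "(real ^ 'd::finite) set" and k :: nat
  assumes "k \<ge> 2" and "finite U" and "card U = k"
    and "V \<subseteq> U" and "card V \<ge> 2"
  shows "(\<integral>\<^sup>+ \<omega>. num_cuts V \<omega> \<partial>stream_space (D2' k V))
           \<le> ennreal (24 * ln (real (card V)) * s_max V * L2 V / Delta V)"
proof -
  have V: "finite V" "card V \<ge> 2" "card V \<le> k"
    using assms card_mono finite_subset by metis+
  interpret D: prob_space "D2' k V"
    using V by (rule prob_space_D2')
  define F where "F = {(x, y) \<in> V \<times> V. far V x y}"
  define p where "p = Delta V / (4 * s_max V * L2 V)"
  have "0 < p"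
    using Delta_pos[OF V(1,2)] s_max_bounds(1)[OF V(1,2)] L2_pos[OF V(1,2)] by (simp add: p_def)
  then have "(\<integral>\<^sup>+ \<omega>. num_cuts V \<omega> \<partial>stream_space (D2' k V)) \<le> ennreal ((ln (card F) + 2) / p)"
    unfolding num_cuts_eq_cover_time F_def[symmetric]
    using V finite_far_pairs[OF V(1,2)] far_pairs_nonempty[OF V(1,2)]
    by (intro D.nn_integral_cover_time_le) (auto simp: F_def p_def sets_D2' sets_separates prob_separates_ge)
  also have "\<dots> \<le> ennreal (6 * ln (card V) / p)"
    using \<open>0 < p\<close> card_far_pairs_le[OF V(1,2)] far_pairs_nonempty[OF V(1,2)] finite_far_pairs[OF V(1,2)] V(2)
    by (intro ennreal_leI divide_right_mono ln_plus_two_le) (auto simp: F_def Suc_le_eq card_gt_0_iff)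
  also have "\<dots> = ennreal (24 * ln (real (card V)) * s_max V * L2 V / Delta V)"
    using Delta_pos[OF V(1,2)] by (simp add: p_def mult.assoc)
  finally show ?thesis .
qed

end
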